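(* Let $n,m$ be even integers with $0\le m\le n$, let $w_H(x)=e^{-x^2}$ on $\mathbb{R}$ and let $\{h_l\}_{l\ge0}$ be the orthonormal Hermite polynomials in $L^2(\mathbb{R},w_H)$ (positive leading coefficients). Let $\lambda_{\frac n2+1}$ be the smallest zero of the orthonormal Laguerre polynomial $p^{(-1/2)}_{\frac n2+1}(x)$ and $\lambda^{m/2}_{\frac{n-m}2+1}$ the smallest zero of the associated Laguerre polynomial $p^{(-1/2)}_{\frac{n-m}2+1}(x,\frac m2)$. Then: (1) The minimizers of $\operatorname{var}_S$ over $\mathbb{S}_n$ are exactly $\mathcal{H}_n(x)=\kappa_1\sum_{l=0}^{n/2}p^{(-1/2)}_l(\lambda_{\frac n2+1})\,h_{2l}(x)$ with $\kappa_1\in\mathbb{C}$ chosen so that $\|\mathcal{H}_n\|=1$ (unique up to a unimodular scalar), and $\min_{P\in\mathbb{S}_n}\operatorname{var}_S(P)=\lambda_{\frac n2+1}$. (2) The minimizers of $\operatorname{var}_S$ over $\mathbb{S}^m_n$ are exactly $\mathcal{H}^m_n(x)=\kappa_2\sum_{l=m/2}^{n/2}p^{(-1/2)}_{l-\frac m2}(\lambda^{m/2}_{\frac{n-m}2+1},\tfrac m2)\,h_{2l}(x)$ with $\kappa_2\in\mathbb{C}$ chosen so that $\|\mathcal{H}^m_n\|=1$ (unique up to a unimodular scalar), and $\min_{P\in\mathbb{S}^m_n}\operatorname{var}_S(P)=\lambda^{m/2}_{\frac{n-m}2+1}$.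
   Context: Norm: $\|f\|^2=\int_{\mathbb{R}}|f|^2e^{-x^2}dx$. $\operatorname{var}_S(f)=\int_{\mathbb{R}}x^2|f(x)|^2e^{-x^2}dx$. $\Pi_n=\{\sum_{l=0}^nc_lh_l\}$, $\Pi^m_n=\{\sum_{l=m}^nc_lh_l\}$ ($c_l\in\mathbb{C}$), and $\mathbb{S}_n,\mathbb{S}^m_n$ are their norm-one elements. For $\alpha>-1$, $p^{(\alpha)}_l$ are the orthonormal Laguerre polynomials in $L^2([0,\infty),x^\alpha e^{-x})$ with positive leading coefficient; they satisfy $b_{l+1}p^{(\alpha)}_{l+1}(x)=(x-a_l)p^{(\alpha)}_l(x)-b_lp^{(\alpha)}_{l-1}(x)$ with $a_l=2l+\alpha+1$, $b_l=\sqrt{l(l+\alpha)}$ for $l\ge1$. The associated Laguerre polynomials are defined by $p^{(\alpha)}_{-1}(x,M)=0$, $p^{(\alpha)}_0(x,M)=1$, $b_{M+l+1}p^{(\alpha)}_{l+1}(x,M)=(x-a_{M+l})p^{(\alpha)}_l(x,M)-b_{M+l}p^{(\alpha)}_{l-1}(x,M)$, $l\ge0$. *)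

theory Defs
  imports "HOL-Analysis.Analysis"
begin

text \<open>Physicists' Hermite polynomials H_l (leading coefficient 2^l), orthogonal for e^{-x^2}
  with squared norm sqrt(pi) 2^l l!.\<close>
fun hermite_H :: "nat \<Rightarrow> real \<Rightarrow> real" where
  "hermite_H 0 x = 1"
| "hermite_H (Suc 0) x = 2 * x"
| "hermite_H (Suc (Suc l)) x = 2 * x * hermite_H (Suc l) x - 2 * real (Suc l) * hermite_H l x"

definition herm_h :: "nat \<Rightarrow> real \<Rightarrow> real" where
  "herm_h l x = hermite_H l x / sqrt (sqrt pi * 2 ^ l * fact l)"

definition wnorm :: "(real \<Rightarrow> complex) \<Rightarrow> real" where
  "wnorm f = sqrt (LINT x|lborel. (cmod (f x))\<^sup>2 * exp (- x\<^sup>2))"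

definition varS :: "(real \<Rightarrow> complex) \<Rightarrow> real" where
  "varS f = (LINT x|lborel. x\<^sup>2 * (cmod (f x))\<^sup>2 * exp (- x\<^sup>2))"

definition PiH :: "nat \<Rightarrow> (real \<Rightarrow> complex) set" where
  "PiH n = {P. \<exists>c :: nat \<Rightarrow> complex. P = (\<lambda>x. \<Sum>l\<le>n. c l * complex_of_real (herm_h l x))}"

definition PiH_from :: "nat \<Rightarrow> nat \<Rightarrow> (real \<Rightarrow> complex) set" where
  "PiH_from m n = {P. \<exists>c :: nat \<Rightarrow> complex. P = (\<lambda>x. \<Sum>l=m..n. c l * complex_of_real (herm_h l x))}"

definition SH :: "nat \<Rightarrow> (real \<Rightarrow> complex) set" where
  "SH n = {P \<in> PiH n. wnorm P = 1}"

definition SH_from :: "nat \<Rightarrow> nat \<Rightarrow> (real \<Rightarrow> complex) set" where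
  "SH_from m n = {P \<in> PiH_from m n. wnorm P = 1}"

definition lag_a :: "real \<Rightarrow> nat \<Rightarrow> real" where
  "lag_a \<alpha> l = 2 * real l + \<alpha> + 1"

definition lag_b :: "real \<Rightarrow> nat \<Rightarrow> real" where
  "lag_b \<alpha> l = sqrt (real l * (real l + \<alpha>))"

text \<open>Orthonormal Laguerre polynomials p^{(alpha)}_l in L^2([0,inf), x^alpha e^{-x}) with positive
  leading coefficient, via the three-term recurrence (p_{-1} = 0, p_0 = Gamma(alpha+1)^{-1/2}).\<close>
fun lag_p :: "real \<Rightarrow> nat \<Rightarrow> real \<Rightarrow> real" where
  "lag_p \<alpha> 0 x = 1 / sqrt (Gamma (\<alpha> + 1))"
| "lag_p \<alpha> (Suc 0) x = (x - lag_a \<alpha> 0) * lag_p \<alpha> 0 x / lag_b \<alpha> 1"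
| "lag_p \<alpha> (Suc (Suc l)) x =
     ((x - lag_a \<alpha> (Suc l)) * lag_p \<alpha> (Suc l) x - lag_b \<alpha> (Suc l) * lag_p \<alpha> l x)
       / lag_b \<alpha> (Suc (Suc l))"

fun lag_assoc :: "real \<Rightarrow> nat \<Rightarrow> nat \<Rightarrow> real \<Rightarrow> real" where
  "lag_assoc \<alpha> M 0 x = 1"
| "lag_assoc \<alpha> M (Suc 0) x = (x - lag_a \<alpha> M) / lag_b \<alpha> (M + 1)"
| "lag_assoc \<alpha> M (Suc (Suc l)) x =
     ((x - lag_a \<alpha> (M + Suc l)) * lag_assoc \<alpha> M (Suc l) x
        - lag_b \<alpha> (M + Suc l) * lag_assoc \<alpha> M l x) / lag_b \<alpha> (M + Suc l + 1)"

definition smallest_zero :: "(real \<Rightarrow> real) \<Rightarrow> real" where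
  "smallest_zero f = Min {x. f x = 0}"

definition lam_n :: "nat \<Rightarrow> real" where
  "lam_n n = smallest_zero (lag_p (-1/2) (n div 2 + 1))"

definition lam_mn :: "nat \<Rightarrow> nat \<Rightarrow> real" where
  "lam_mn m n = smallest_zero (lag_assoc (-1/2) (m div 2) ((n - m) div 2 + 1))"

definition Hcal :: "nat \<Rightarrow> real \<Rightarrow> complex" where
  "Hcal n x = complex_of_real (\<Sum>l\<le>n div 2. lag_p (-1/2) l (lam_n n) * herm_h (2 * l) x)"

definition Hcal_from :: "nat \<Rightarrow> nat \<Rightarrow> real \<Rightarrow> complex" where
  "Hcal_from m n x = complex_of_real
     (\<Sum>l=m div 2..n div 2. lag_assoc (-1/2) (m div 2) (l - m div 2) (lam_mn m n) * herm_h (2 * l) x)"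

end

theory Submission
  imports Defs "HOL-Probability.Distributions" "HOL-Real_Asymp.Real_Asymp"
begin

text \<open>
  Write \<open>P = \<Sum> c\<^sub>l h\<^sub>l\<close>. The three-term recurrence of the Hermite functions makes
  \<open>var\<^sub>S(P) = \<parallel>x P\<parallel>\<^sup>2\<close> a quadratic form in the coefficients that splits into a part in the even
  coefficients \<open>u\<^sub>k = c\<^sub>2\<^sub>k\<close> and a part in the odd ones \<open>v\<^sub>k = c\<^sub>2\<^sub>k\<^sub>+\<^sub>1\<close>. The even part is the
  quadratic form of the Jacobi matrix of the Laguerre polynomials \<open>p\<^sup>(\<^sup>-\<^sup>1\<^sup>/\<^sup>2\<^sup>)\<close> (as \<open>h\<^sub>2\<^sub>k(x)\<close>
  is a multiple of \<open>p\<^sup>(\<^sup>-\<^sup>1\<^sup>/\<^sup>2\<^sup>)\<^sub>k(x\<^sup>2)\<close>), truncated to the indices \<open>m/2, \<dots>, n/2\<close>. The associated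
  polynomials evaluated at the smallest zero \<open>\<lambda>\<close> of \<open>p\<^sub>(\<^sub>n\<^sub>-\<^sub>m\<^sub>)\<^sub>/\<^sub>2\<^sub>+\<^sub>1(x, m/2)\<close> give an
  eigenvector \<open>w\<close> whose entries alternate in sign, by interlacing of the zeros. Substituting
  \<open>u = w y\<close> and summing by parts writes the even part as \<open>\<lambda> \<parallel>u\<parallel>\<^sup>2\<close> plus a nonnegative sum of
  \<open>|y\<^sub>k - y\<^sub>k\<^sub>+\<^sub>1|\<^sup>2\<close>, which yields the bound and forces \<open>u\<close> to be a multiple of \<open>w\<close> in the
  equality case. The odd part dominates the even form up to a telescoping sum, so odd coefficients
  only increase the variance. Part (1) is the case \<open>m = 0\<close>, where \<open>p\<^sup>(\<^sup>-\<^sup>1\<^sup>/\<^sup>2\<^sup>)\<^sub>l\<close> is a constant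
  multiple of \<open>p\<^sub>l(x, 0)\<close>.
\<close>


section \<open>Orthonormality of the Hermite polynomials\<close>

fun hermite_poly :: "nat \<Rightarrow> real poly" where
  "hermite_poly 0 = 1"
| "hermite_poly (Suc 0) = [:0, 2:]"
| "hermite_poly (Suc (Suc l)) = [:0, 2:] * hermite_poly (Suc l) - smult (2 * real (Suc l)) (hermite_poly l)"

lemma poly_hermite_poly: "poly (hermite_poly l) x = hermite_H l x"
  by (induction l rule: hermite_poly.induct) (auto simp: algebra_simps)

lemma hermite_poly_Suc:
  "hermite_poly (Suc l) = [:0, 2:] * hermite_poly l - smult (2 * real l) (hermite_poly (l - 1))"
  by (cases l) auto

lemma pderiv_hermite_poly: "pderiv (hermite_poly l) = smult (2 * real l) (hermite_poly (l - 1))"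
proof (induction l rule: hermite_poly.induct)
  case (3 l)
  have "pderiv (hermite_poly (Suc (Suc l)))
      = smult 2 (hermite_poly (Suc l)) + [:0, 2:] * smult (2 * real (Suc l)) (hermite_poly l)
        - smult (2 * real (Suc l)) (smult (2 * real l) (hermite_poly (l - 1)))"
    using 3 by (simp add: pderiv_mult pderiv_diff pderiv_smult pderiv_pCons)
  also have "\<dots> = smult 2 (hermite_poly (Suc l)) + smult (2 * real (Suc l)) (hermite_poly (Suc l))"
    by (subst (2) hermite_poly_Suc) (simp add: algebra_simps smult_diff_right)
  also have "\<dots> = smult (2 * real (Suc (Suc l))) (hermite_poly (Suc l))"
    by (simp add: algebra_simps smult_add_left[symmetric])
  finally show ?case by simp
qed (simp_all add: pderiv_pCons)

lemma gaussian_eq_normal_density: "exp (- x\<^sup>2) = sqrt pi * normal_density 0 (sqrt (1/2)) x"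
  by (simp add: normal_density_def real_sqrt_mult)

lemma integrable_power_gaussian: "integrable lborel (\<lambda>x::real. x ^ k * exp (- x\<^sup>2))"
proof -
  have "integrable lborel (\<lambda>x. sqrt pi * (normal_density 0 (sqrt (1/2)) x * (x - 0) ^ k))"
    by (intro integrable_mult_right integrable_normal_moment) simp
  then show ?thesis
    by (simp add: gaussian_eq_normal_density mult_ac)
qed

lemma integral_gaussian: "(LINT x|lborel. exp (- (x::real)\<^sup>2)) = sqrt pi"
  by (simp add: gaussian_eq_normal_density)

lemma poly_gaussian_eq_sum:
  fixes p :: "real poly"
  shows "poly p x * exp (- x\<^sup>2) = (\<Sum>i\<le>degree p. coeff p i * (x ^ i * exp (- x\<^sup>2)))"
  by (simp add: poly_altdef sum_distrib_right mult.assoc)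

lemma integrable_poly_gaussian:
  fixes p :: "real poly"
  shows "integrable lborel (\<lambda>x. poly p x * exp (- x\<^sup>2))"
  by (simp add: poly_gaussian_eq_sum integrable_power_gaussian)

lemma poly_gaussian_tendsto_zero:
  fixes p :: "real poly"
  shows "((\<lambda>x. poly p x * exp (- x\<^sup>2)) \<longlongrightarrow> 0) at_top"
    and "((\<lambda>x. poly p x * exp (- x\<^sup>2)) \<longlongrightarrow> 0) at_bot"
proof -
  have top: "((\<lambda>x::real. x ^ i * exp (- x\<^sup>2)) \<longlongrightarrow> 0) at_top"
    and bot: "((\<lambda>x::real. x ^ i * exp (- x\<^sup>2)) \<longlongrightarrow> 0) at_bot" for i
    by real_asymp+
  show "((\<lambda>x. poly p x * exp (- x\<^sup>2)) \<longlongrightarrow> 0) at_top"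
    unfolding poly_gaussian_eq_sum by (intro tendsto_null_sum tendsto_mult_right_zero top)
  show "((\<lambda>x. poly p x * exp (- x\<^sup>2)) \<longlongrightarrow> 0) at_bot"
    unfolding poly_gaussian_eq_sum by (intro tendsto_null_sum tendsto_mult_right_zero bot)
qed

text \<open>The integrand is the derivative of \<open>p(x) exp(-x\<^sup>2)\<close>, which vanishes at \<open>\<plusminus>\<infinity>\<close>.\<close>
lemma integral_gaussian_derivative:
  fixes p :: "real poly"
  shows "(LINT x|lborel. poly (pderiv p - [:0, 2:] * p) x * exp (- x\<^sup>2)) = 0"
proof -
  let ?f = "\<lambda>x. poly (pderiv p - [:0, 2:] * p) x * exp (- x\<^sup>2)"
  let ?F = "\<lambda>x. poly p x * exp (- x\<^sup>2)"
  have "interval_lebesgue_integral lborel (-\<infinity>) \<infinity> ?f = 0 - 0"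
  proof (rule interval_integral_FTC_integrable)
    fix x :: real
    have "(?F has_real_derivative ?f x) (at x)"
      by (auto intro!: derivative_eq_intros poly_DERIV simp: algebra_simps)
    then show "(?F has_vector_derivative ?f x) (at x)"
      by (simp add: has_real_derivative_iff_has_vector_derivative)
    show "isCont ?f x" by (intro continuous_intros)
  next
    show "set_integrable lborel (einterval (-\<infinity>) \<infinity>) ?f"
      using integrable_poly_gaussian[of "pderiv p - [:0, 2:] * p"] by (simp add: set_integrable_def)
    show "((?F \<circ> real_of_ereal) \<longlongrightarrow> 0) (at_right (-\<infinity>))"
      "((?F \<circ> real_of_ereal) \<longlongrightarrow> 0) (at_left \<infinity>)"
      unfolding ereal_tendsto_simps1 by (rule poly_gaussian_tendsto_zero)+
  qed simp
  then show ?thesis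
    by (simp add: interval_lebesgue_integral_def set_lebesgue_integral_def)
qed

definition gauss_integral :: "real poly \<Rightarrow> real" where
  "gauss_integral p = (LINT x|lborel. poly p x * exp (- x\<^sup>2))"

lemma gauss_integral_diff: "gauss_integral (p - q) = gauss_integral p - gauss_integral q"
  unfolding gauss_integral_def by (simp add: left_diff_distrib integrable_poly_gaussian)

lemma gauss_integral_smult: "gauss_integral (smult c p) = c * gauss_integral p"
  unfolding gauss_integral_def by (simp add: mult.assoc)

lemma gauss_integral_hermite_Suc:
  "gauss_integral (hermite_poly (Suc k) * hermite_poly l)
     = 2 * real l * gauss_integral (hermite_poly k * hermite_poly (l - 1))"
proof -
  let ?p = "hermite_poly k * hermite_poly l"
  have "pderiv ?p - [:0, 2:] * ?p
      = smult (2 * real l) (hermite_poly k * hermite_poly (l - 1)) - hermite_poly (Suc k) * hermite_poly l"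
    by (simp add: pderiv_mult pderiv_hermite_poly hermite_poly_Suc[of k] algebra_simps)
  then have "gauss_integral (smult (2 * real l) (hermite_poly k * hermite_poly (l - 1))
      - hermite_poly (Suc k) * hermite_poly l) = 0"
    using integral_gaussian_derivative[of ?p] unfolding gauss_integral_def by simp
  then show ?thesis
    by (simp add: gauss_integral_diff gauss_integral_smult)
qed

lemma gauss_integral_hermite:
  "gauss_integral (hermite_poly k * hermite_poly l) = (if k = l then sqrt pi * 2 ^ k * fact k else 0)"
proof (induction k arbitrary: l)
  case 0
  show ?case
  proof (cases l)
    case (Suc l')
    then show ?thesis
      using gauss_integral_hermite_Suc[of l' 0] by (simp add: mult.commute)
  qed (simp add: gauss_integral_def integral_gaussian)
next
  case (Suc k)
  show ?case
  proof (cases l)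
    case 0
    then show ?thesis using gauss_integral_hermite_Suc[of k 0] by simp
  qed (simp add: Suc.IH gauss_integral_hermite_Suc)
qed

definition hermite_norm :: "nat \<Rightarrow> real" where
  "hermite_norm l = sqrt (sqrt pi * 2 ^ l * fact l)"

lemma hermite_norm_pos: "hermite_norm l > 0"
  by (simp add: hermite_norm_def)

lemma hermite_norm_Suc: "hermite_norm (Suc l) = sqrt (2 * real (Suc l)) * hermite_norm l"
  by (simp add: hermite_norm_def real_sqrt_mult[symmetric] algebra_simps)

lemma herm_h_eq: "herm_h l x = hermite_H l x / hermite_norm l"
  by (simp add: herm_h_def hermite_norm_def)

lemma herm_h_product_gaussian:
  "herm_h k x * herm_h l x * exp (- x\<^sup>2)
     = poly (hermite_poly k * hermite_poly l) x * exp (- x\<^sup>2) / (hermite_norm k * hermite_norm l)"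
  by (simp add: herm_h_eq poly_hermite_poly)

lemma integrable_herm_h_product: "integrable lborel (\<lambda>x. herm_h k x * herm_h l x * exp (- x\<^sup>2))"
  unfolding herm_h_product_gaussian by (intro integrable_divide_zero integrable_poly_gaussian)

lemma herm_h_orthonormal:
  "(LINT x|lborel. herm_h k x * herm_h l x * exp (- x\<^sup>2)) = (if k = l then 1 else 0)"
proof -
  have "(LINT x|lborel. herm_h k x * herm_h l x * exp (- x\<^sup>2))
      = gauss_integral (hermite_poly k * hermite_poly l) / (hermite_norm k * hermite_norm l)"
    unfolding herm_h_product_gaussian gauss_integral_def by simp
  also have "\<dots> = (if k = l then 1 else 0)"
    using hermite_norm_pos[of k]
    by (simp add: gauss_integral_hermite hermite_norm_def power2_eq_square[symmetric])
  finally show ?thesis .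
qed


section \<open>Multiplication by \<open>x\<close> in the Hermite basis\<close>

lemma sqrt_half: "sqrt (a / 2) = sqrt (2 * a) / (2::real)"
proof -
  have "sqrt (a / 2) * sqrt 4 = sqrt (2 * a)"
    by (simp only: real_sqrt_mult[symmetric]) simp
  then show ?thesis by simp
qed

lemma hermite_H_Suc: "hermite_H (Suc l) x = 2 * x * hermite_H l x - 2 * real l * hermite_H (l - 1) x"
  by (cases l) simp_all

lemma x_mult_herm_h:
  "x * herm_h l x = sqrt (real (Suc l) / 2) * herm_h (Suc l) x + sqrt (real l / 2) * herm_h (l - 1) x"
proof -
  have up: "sqrt (real (Suc l) / 2) * herm_h (Suc l) x = hermite_H (Suc l) x / (2 * hermite_norm l)"
    unfolding sqrt_half using hermite_norm_pos[of l]
    by (simp add: herm_h_eq hermite_norm_Suc field_simps del: of_nat_Suc)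
  have down: "sqrt (real l / 2) * herm_h (l - 1) x = real l * hermite_H (l - 1) x / hermite_norm l"
  proof (cases l)
    case (Suc k)
    have "sqrt (2 * real l) * sqrt (2 * real l) = 2 * real l" by simp
    then show ?thesis
      unfolding sqrt_half using Suc hermite_norm_pos[of k]
      by (simp add: herm_h_eq hermite_norm_Suc field_simps del: of_nat_Suc)
  qed simp
  show ?thesis
    unfolding up down using hermite_norm_pos[of l]
    by (simp add: herm_h_eq hermite_H_Suc field_simps)
qed

definition herm_expansion :: "(nat \<Rightarrow> complex) \<Rightarrow> nat \<Rightarrow> real \<Rightarrow> complex" where
  "herm_expansion c L x = (\<Sum>l\<le>L. c l * complex_of_real (herm_h l x))"

lemma cmod_sq_eq_Re: "(cmod z)\<^sup>2 = Re (z * cnj z)"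
  by (metis Re_complex_of_real complex_norm_square)

lemma norm_herm_expansion_sq:
  "(cmod (herm_expansion c L x))\<^sup>2 * exp (- x\<^sup>2)
     = (\<Sum>k\<le>L. \<Sum>l\<le>L. Re (c k * cnj (c l)) * (herm_h k x * herm_h l x * exp (- x\<^sup>2)))"
proof -
  have "(cmod (herm_expansion c L x))\<^sup>2
      = Re ((\<Sum>k\<le>L. c k * complex_of_real (herm_h k x)) * (\<Sum>l\<le>L. cnj (c l) * complex_of_real (herm_h l x)))"
    by (simp add: herm_expansion_def cmod_sq_eq_Re cnj_sum)
  also have "\<dots> = (\<Sum>k\<le>L. \<Sum>l\<le>L. Re (c k * cnj (c l)) * (herm_h k x * herm_h l x))"
    by (simp add: sum_product Re_sum algebra_simps)
  finally show ?thesis by (simp add: sum_distrib_right mult.assoc)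
qed

lemma wnorm_sq: "(wnorm f)\<^sup>2 = (LINT x|lborel. (cmod (f x))\<^sup>2 * exp (- x\<^sup>2))"
  unfolding wnorm_def by (simp add: integral_nonneg)

lemma wnorm_nonneg: "0 \<le> wnorm f"
  by (simp add: wnorm_def integral_nonneg)

lemma wnorm_scale: "wnorm (\<lambda>x. \<kappa> * f x) = cmod \<kappa> * wnorm f"
  by (simp add: wnorm_def norm_mult power_mult_distrib mult.assoc real_sqrt_mult)

lemma wnorm_herm_expansion: "(wnorm (herm_expansion c L))\<^sup>2 = (\<Sum>l\<le>L. (cmod (c l))\<^sup>2)"
proof -
  have "(wnorm (herm_expansion c L))\<^sup>2
      = (\<Sum>k\<le>L. \<Sum>l\<le>L. Re (c k * cnj (c l)) * (LINT x|lborel. herm_h k x * herm_h l x * exp (- x\<^sup>2)))"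
    unfolding wnorm_sq norm_herm_expansion_sq by (simp add: integrable_herm_h_product)
  also have "\<dots> = (\<Sum>l\<le>L. (cmod (c l))\<^sup>2)"
    by (simp add: herm_h_orthonormal if_distrib cmod_sq_eq_Re cong: if_cong)
  finally show ?thesis .
qed

lemma varS_eq_wnorm_x_mult: "varS f = (wnorm (\<lambda>x. complex_of_real x * f x))\<^sup>2"
  unfolding wnorm_sq varS_def by (simp add: norm_mult power_mult_distrib)

text \<open>Coefficients of \<open>x P\<close> in the Hermite basis; at \<open>j = 0\<close> the junk value \<open>c (0 - 1)\<close> is
  multiplied by \<open>sqrt 0\<close>.\<close>
definition x_coeff :: "(nat \<Rightarrow> complex) \<Rightarrow> nat \<Rightarrow> complex" where
  "x_coeff c j = complex_of_real (sqrt (real j / 2)) * c (j - 1)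
                 + complex_of_real (sqrt (real (Suc j) / 2)) * c (Suc j)"

lemma x_mult_herm_expansion:
  assumes "\<forall>l>L. c l = 0"
  shows "complex_of_real x * herm_expansion c L x = herm_expansion (x_coeff c) (Suc L) x"
proof -
  define up where "up j = complex_of_real (sqrt (real j / 2)) * c (j - 1) * complex_of_real (herm_h j x)" for j
  define down where "down l = c l * complex_of_real (sqrt (real l / 2)) * complex_of_real (herm_h (l - 1) x)" for l
  have "complex_of_real x * herm_expansion c L x = (\<Sum>l\<le>L. c l * complex_of_real (x * herm_h l x))"
    by (simp add: herm_expansion_def sum_distrib_left mult.left_commute)
  also have "\<dots> = (\<Sum>l\<le>L. up (Suc l)) + (\<Sum>l\<le>L. down l)"
    by (simp add: x_mult_herm_h up_def down_def sum.distrib algebra_simps)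
  also have "(\<Sum>l\<le>L. up (Suc l)) = (\<Sum>j\<le>Suc L. up j)"
    by (simp only: sum.atMost_Suc_shift) (simp add: up_def)
  also have "(\<Sum>l\<le>L. down l) = (\<Sum>l\<le>Suc (Suc L). down l)"
    using assms by (simp add: down_def)
  also have "\<dots> = (\<Sum>j\<le>Suc L. down (Suc j))"
    by (simp only: sum.atMost_Suc_shift) (simp add: down_def)
  also have "(\<Sum>j\<le>Suc L. up j) + (\<Sum>j\<le>Suc L. down (Suc j)) = herm_expansion (x_coeff c) (Suc L) x"
    by (simp add: herm_expansion_def up_def down_def x_coeff_def sum.distrib[symmetric] algebra_simps)
  finally show ?thesis .
qed

lemma varS_herm_expansion:
  assumes "\<forall>l>L. c l = 0"
  shows "varS (herm_expansion c L) = (\<Sum>j\<le>Suc L. (cmod (x_coeff c j))\<^sup>2)"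
  unfolding varS_eq_wnorm_x_mult x_mult_herm_expansion[OF assms] wnorm_herm_expansion ..

lemma PiH_from_herm_expansion:
  assumes "P \<in> PiH_from m n"
  obtains c where "\<And>l. c l \<noteq> 0 \<Longrightarrow> m \<le> l \<and> l \<le> n" "P = herm_expansion c n"
proof -
  obtain c where P: "P = (\<lambda>x. \<Sum>l=m..n. c l * complex_of_real (herm_h l x))"
    using assms unfolding PiH_from_def by blast
  define c' where "c' l = (if m \<le> l \<and> l \<le> n then c l else 0)" for l
  have "P = herm_expansion c' n"
    unfolding P herm_expansion_def c'_def
    by (intro ext sum.mono_neutral_cong_left) auto
  moreover have "\<And>l. c' l \<noteq> 0 \<Longrightarrow> m \<le> l \<and> l \<le> n"
    by (simp add: c'_def split: if_splits)
  ultimately show ?thesis using that by blast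
qed

lemma herm_expansion_in_PiH_from:
  assumes "\<And>l. c l \<noteq> 0 \<Longrightarrow> m \<le> l \<and> l \<le> n"
  shows "herm_expansion c n \<in> PiH_from m n"
proof -
  have "herm_expansion c n = (\<lambda>x. \<Sum>l=m..n. c l * complex_of_real (herm_h l x))"
    unfolding herm_expansion_def using assms
    by (intro ext sum.mono_neutral_cong_right) force+
  then show ?thesis
    unfolding PiH_from_def by blast
qed


section \<open>Splitting the variance into even and odd parts\<close>

text \<open>Multiplication by \<open>x\<close> exchanges even and odd Hermite functions, so the variance of
  \<open>\<Sum> c\<^sub>l h\<^sub>l\<close> is \<open>var_even\<close> of \<open>u\<^sub>k = c\<^sub>2\<^sub>k\<close> plus \<open>var_odd\<close> of \<open>v\<^sub>k = c\<^sub>2\<^sub>k\<^sub>+\<^sub>1\<close>.\<close>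
definition var_even :: "nat \<Rightarrow> (nat \<Rightarrow> complex) \<Rightarrow> real" where
  "var_even N u = (\<Sum>k\<le>N. (cmod (complex_of_real (sqrt (real k + 1/2)) * u k
                               + complex_of_real (sqrt (real k + 1)) * u (Suc k)))\<^sup>2)"

definition var_odd :: "nat \<Rightarrow> (nat \<Rightarrow> complex) \<Rightarrow> real" where
  "var_odd N v = (\<Sum>k\<le>N. (cmod (complex_of_real (sqrt (real k)) * v (k - 1)
                              + complex_of_real (sqrt (real k + 1/2)) * v k))\<^sup>2)"

lemma sum_atMost_Suc_double: "(\<Sum>j\<le>Suc (2 * N). f j) = (\<Sum>k\<le>N. f (2 * k) + f (Suc (2 * k)))"
  by (induction N) (simp_all add: add.assoc)

lemma x_coeff_odd:
  "x_coeff c (Suc (2 * k)) = complex_of_real (sqrt (real k + 1/2)) * c (2 * k)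
                             + complex_of_real (sqrt (real k + 1)) * c (Suc (Suc (2 * k)))"
proof -
  have "real (Suc (2 * k)) / 2 = real k + 1/2" "real (Suc (Suc (2 * k))) / 2 = real k + 1"
    by simp_all
  then show ?thesis by (simp only: x_coeff_def) simp
qed

lemma x_coeff_even:
  "x_coeff c (2 * k) = complex_of_real (sqrt (real k)) * c (Suc (2 * (k - 1)))
                       + complex_of_real (sqrt (real k + 1/2)) * c (Suc (2 * k))"
proof -
  have "real (Suc (2 * k)) / 2 = real k + 1/2" by simp
  moreover have "c (2 * k - 1) = c (Suc (2 * (k - 1)))" if "k > 0"
    using that by (cases k) simp_all
  ultimately show ?thesis by (cases "k = 0") (simp_all add: x_coeff_def)
qed

lemma varS_even_odd:
  assumes "\<forall>l>2 * N. c l = 0"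
  shows "varS (herm_expansion c (2 * N)) = var_even N (\<lambda>k. c (2 * k)) + var_odd N (\<lambda>k. c (Suc (2 * k)))"
  unfolding varS_herm_expansion[OF assms] sum_atMost_Suc_double x_coeff_even x_coeff_odd
    var_even_def var_odd_def
  by (simp add: sum.distrib)

lemma wnorm_even_odd:
  assumes "\<forall>l>2 * N. c l = 0"
  shows "(wnorm (herm_expansion c (2 * N)))\<^sup>2
           = (\<Sum>k\<le>N. (cmod (c (2 * k)))\<^sup>2) + (\<Sum>k\<le>N. (cmod (c (Suc (2 * k))))\<^sup>2)"
proof -
  have "(\<Sum>l\<le>2 * N. (cmod (c l))\<^sup>2) = (\<Sum>l\<le>Suc (2 * N). (cmod (c l))\<^sup>2)"
    using assms by simp
  then show ?thesis
    by (simp only: wnorm_herm_expansion sum_atMost_Suc_double sum.distrib)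
qed

lemma PiH_from_even_odd:
  assumes "P \<in> PiH_from (2 * M) (2 * N)"
  obtains u v where "\<And>k. u k \<noteq> 0 \<Longrightarrow> M \<le> k \<and> k \<le> N" "\<And>k. v k \<noteq> 0 \<Longrightarrow> M \<le> k \<and> k < N"
    "(wnorm P)\<^sup>2 = (\<Sum>k\<le>N. (cmod (u k))\<^sup>2) + (\<Sum>k\<le>N. (cmod (v k))\<^sup>2)"
    "varS P = var_even N u + var_odd N v"
    "P = herm_expansion (\<lambda>l. if even l then u (l div 2) else v (l div 2)) (2 * N)"
proof -
  obtain c where supp: "\<And>l. c l \<noteq> 0 \<Longrightarrow> 2 * M \<le> l \<and> l \<le> 2 * N" and P: "P = herm_expansion c (2 * N)"
    by (rule PiH_from_herm_expansion[OF assms]) blast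
  have vanish: "\<forall>l>2 * N. c l = 0"
    using supp by force
  have "c = (\<lambda>l. if even l then c (2 * (l div 2)) else c (Suc (2 * (l div 2))))"
    by (auto elim: oddE)
  moreover have "c (2 * k) \<noteq> 0 \<Longrightarrow> M \<le> k \<and> k \<le> N" "c (Suc (2 * k)) \<noteq> 0 \<Longrightarrow> M \<le> k \<and> k < N" for k
    using supp[of "2 * k"] supp[of "Suc (2 * k)"] by auto
  ultimately show ?thesis
    using that[of "\<lambda>k. c (2 * k)" "\<lambda>k. c (Suc (2 * k))"]
      wnorm_even_odd[OF vanish] varS_even_odd[OF vanish] unfolding P by metis
qed


section \<open>The odd part dominates the even part\<close>

lemma cmod_real_combination_sq:
  "(cmod (complex_of_real p * a + complex_of_real q * b))\<^sup>2
     = p\<^sup>2 * (cmod a)\<^sup>2 + q\<^sup>2 * (cmod b)\<^sup>2 + 2 * p * q * Re (a * cnj b)"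
  unfolding cmod_power2 by (simp add: power2_eq_square algebra_simps)

lemma Re_mult_cnj_ge: "- (cmod a * cmod b) \<le> Re (a * cnj b)"
  using abs_Re_le_cmod[of "a * cnj b"] by (simp add: norm_mult)

lemma quadratic_form_nonneg:
  fixes p q r x y :: real
  assumes "p > 0" "r\<^sup>2 \<le> p * q"
  shows "0 \<le> p * x\<^sup>2 + q * y\<^sup>2 - 2 * r * x * y"
proof -
  have "p * (p * x\<^sup>2 + q * y\<^sup>2 - 2 * r * x * y) = (p * x - r * y)\<^sup>2 + (p * q - r\<^sup>2) * y\<^sup>2"
    by (simp add: power2_eq_square algebra_simps)
  also have "\<dots> \<ge> 0" using assms by simp
  finally show ?thesis using assms(1) by (simp add: zero_le_mult_iff)
qed

lemma sqrt_product_lower_bound: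
  fixes A :: real
  assumes "A \<ge> 1"
  shows "A - 1 / (6 * A) \<le> sqrt (A - 1/2) * sqrt (A + 1/2)"
proof (rule power2_le_imp_le)
  have "(A - 1 / (6 * A))\<^sup>2 = A\<^sup>2 - 1/3 + 1 / (36 * A\<^sup>2)"
    using assms by (simp add: power2_eq_square field_simps)
  also have "\<dots> \<le> A\<^sup>2 - 1/4"
  proof -
    have "1 / (36 * A\<^sup>2) \<le> 1 / 36"
      using assms by (intro divide_left_mono) (auto simp: one_le_power)
    then show ?thesis by simp
  qed
  also have "\<dots> = (sqrt (A - 1/2) * sqrt (A + 1/2))\<^sup>2"
    using assms by (simp add: power_mult_distrib power2_eq_square field_simps)
  finally show "(A - 1 / (6 * A))\<^sup>2 \<le> (sqrt (A - 1/2) * sqrt (A + 1/2))\<^sup>2" .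
qed (use assms in simp)

lemma sqrt_difference_bound:
  fixes A :: real
  assumes A: "A \<ge> 1"
  shows "A * (sqrt (A + 1/2) - sqrt (A - 1/2))\<^sup>2 \<le> (1/2 + 1 / (4 * A)) * (1/2 - 1 / (4 * (A + 1)))"
proof -
  define s where "s = sqrt (A - 1/2) + sqrt (A + 1/2)"
  have "s\<^sup>2 = 2 * A + 2 * (sqrt (A - 1/2) * sqrt (A + 1/2))"
    using A by (simp add: s_def power2_sum)
  then have s_sq: "4 * A - 1 / (3 * A) \<le> s\<^sup>2"
    using sqrt_product_lower_bound[OF A] by (simp add: field_simps)
  have "1 / (3 * A) \<le> 1" using A by simp
  then have pos: "0 < 4 * A - 1 / (3 * A)" using A by linarith
  have "(sqrt (A + 1/2) - sqrt (A - 1/2)) * s = 1"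
    using A by (simp add: s_def algebra_simps flip: power2_eq_square)
  then have "sqrt (A + 1/2) - sqrt (A - 1/2) = 1 / s"
    by (auto simp: eq_divide_eq)
  then have "A * (sqrt (A + 1/2) - sqrt (A - 1/2))\<^sup>2 = A / s\<^sup>2"
    by (simp add: power_divide)
  also have "\<dots> \<le> A / (4 * A - 1 / (3 * A))"
    using A s_sq pos by (intro divide_left_mono mult_pos_pos) auto
  also have "\<dots> = 3 * A\<^sup>2 / (12 * A\<^sup>2 - 1)"
    using A by (simp add: field_simps power2_eq_square)
  also have "\<dots> \<le> (2 * A + 1)\<^sup>2 / (16 * A * (A + 1))"
  proof -
    have "A \<le> A\<^sup>2"
      using mult_right_mono[OF A, of A] A by (simp add: power2_eq_square)
    then have "8 * A\<^sup>2 - 4 * A - 1 \<ge> 0" "12 * A\<^sup>2 - 1 > 0"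
      using A by linarith+
    then show ?thesis
      using A by (simp add: divide_le_eq le_divide_eq power2_eq_square algebra_simps)
  qed
  also have "\<dots> = (2 * A + 1) / (4 * A) * ((2 * A + 1) / (4 * (A + 1)))"
    by (simp add: power2_eq_square)
  also have "\<dots> = (1/2 + 1 / (4 * A)) * (1/2 - 1 / (4 * (A + 1)))"
  proof -
    have "1/2 + 1 / (4 * A) = (2 * A + 1) / (4 * A)" "1/2 - 1 / (4 * (A + 1)) = (2 * A + 1) / (4 * (A + 1))"
      using A by (simp_all add: field_simps)
    then show ?thesis by simp
  qed
  finally show ?thesis .
qed

lemma var_term_difference_ge:
  fixes A :: real
  assumes A: "A \<ge> 1"
  shows "(cmod b)\<^sup>2 / (4 * (A + 1)) - (cmod a)\<^sup>2 / (4 * A)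
     \<le> (cmod (complex_of_real (sqrt A) * a + complex_of_real (sqrt (A + 1/2)) * b))\<^sup>2
       - (cmod (complex_of_real (sqrt (A - 1/2)) * a + complex_of_real (sqrt A) * b))\<^sup>2"
proof -
  define r where "r = sqrt A * (sqrt (A + 1/2) - sqrt (A - 1/2))"
  have r_nonneg: "r \<ge> 0"
    using A by (simp add: r_def)
  have diff: "(cmod (complex_of_real (sqrt A) * a + complex_of_real (sqrt (A + 1/2)) * b))\<^sup>2
       - (cmod (complex_of_real (sqrt (A - 1/2)) * a + complex_of_real (sqrt A) * b))\<^sup>2
     = 1/2 * (cmod a)\<^sup>2 + 1/2 * (cmod b)\<^sup>2 + 2 * r * Re (a * cnj b)"
    using A unfolding cmod_real_combination_sq r_def by (simp add: algebra_simps)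
  have "- (2 * r * (cmod a * cmod b)) \<le> 2 * r * Re (a * cnj b)"
    using mult_left_mono[OF Re_mult_cnj_ge[of a b], of "2 * r"] r_nonneg by simp
  moreover have "0 \<le> (1/2 + 1 / (4 * A)) * (cmod a)\<^sup>2 + (1/2 - 1 / (4 * (A + 1))) * (cmod b)\<^sup>2
                        - 2 * r * cmod a * cmod b"
  proof (rule quadratic_form_nonneg)
    show "0 < 1/2 + 1 / (4 * A)"
      using A by (simp add: add_pos_nonneg)
    show "r\<^sup>2 \<le> (1/2 + 1 / (4 * A)) * (1/2 - 1 / (4 * (A + 1)))"
      using sqrt_difference_bound[OF A] A by (simp add: r_def power_mult_distrib)
  qed
  ultimately show ?thesis
    unfolding diff by (simp add: algebra_simps)
qed

text \<open>The \<open>(k+1)\<close>-st summand of \<open>var_odd\<close> exceeds the \<open>k\<close>-th summand of \<open>var_even\<close> by at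
  least \<open>f\<^sub>k\<^sub>+\<^sub>1 - f\<^sub>k\<close> with \<open>f\<^sub>k = |v\<^sub>k|\<^sup>2 / (4(k+1))\<close>, and these differences telescope.\<close>
lemma var_even_le_var_odd:
  assumes "v N = 0" "v (Suc N) = 0"
  shows "var_even N v \<le> var_odd N v"
proof -
  define odd_term where "odd_term k = (cmod (complex_of_real (sqrt (real k)) * v (k - 1)
                              + complex_of_real (sqrt (real k + 1/2)) * v k))\<^sup>2" for k
  define even_term where "even_term k = (cmod (complex_of_real (sqrt (real k + 1/2)) * v k
                               + complex_of_real (sqrt (real k + 1)) * v (Suc k)))\<^sup>2" for k
  define f where "f k = (cmod (v k))\<^sup>2 / (4 * (real k + 1))" for k
  have odd_sum: "var_odd N v = odd_term 0 + (\<Sum>k<N. odd_term (Suc k))"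
    unfolding var_odd_def odd_term_def lessThan_Suc_atMost[symmetric] by (simp only: sum.lessThan_Suc_shift)
  have even_sum: "var_even N v = (\<Sum>k<N. even_term k)"
    unfolding var_even_def even_term_def lessThan_Suc_atMost[symmetric] using assms by simp
  have "f (Suc k) - f k \<le> odd_term (Suc k) - even_term k" for k
  proof -
    have "real k + 1 - 1/2 = real k + 1/2" "real (Suc k) = real k + 1"
      "real (Suc k) + 1/2 = real k + 1 + 1/2" "real (Suc k) + 1 = real k + 1 + 1"
      by simp_all
    then show ?thesis
      using var_term_difference_ge[of "real k + 1" "v (Suc k)" "v k"]
      by (simp only: f_def odd_term_def even_term_def diff_Suc_1)
  qed
  then have "(\<Sum>k<N. f (Suc k) - f k) \<le> (\<Sum>k<N. odd_term (Suc k) - even_term k)"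
    by (rule sum_mono)
  moreover have "(\<Sum>k<N. f (Suc k) - f k) = - f 0"
    unfolding sum_lessThan_telescope using assms by (simp add: f_def)
  ultimately have "- f 0 \<le> (\<Sum>k<N. odd_term (Suc k)) - (\<Sum>k<N. even_term k)"
    by (simp add: sum_subtractf)
  moreover have "f 0 \<le> odd_term 0"
    by (simp add: odd_term_def f_def norm_mult power_mult_distrib)
  ultimately show ?thesis
    unfolding odd_sum even_sum by linarith
qed


section \<open>Ground-state bound for the Laguerre Jacobi matrix\<close>

lemma lag_b_pos: "-1 < \<alpha> \<Longrightarrow> 1 \<le> n \<Longrightarrow> 0 < lag_b \<alpha> n"
  by (simp add: lag_b_def)

lemma lag_b_sq: "-1 < \<alpha> \<Longrightarrow> 1 \<le> n \<Longrightarrow> (lag_b \<alpha> n)\<^sup>2 = real n * (real n + \<alpha>)"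
  by (simp add: lag_b_def)

lemma lag_a_minus_half: "lag_a (-1/2) k = 2 * real k + 1/2"
  by (simp add: lag_a_def)

lemma lag_b_minus_half_Suc: "lag_b (-1/2) (Suc k) = sqrt (real k + 1/2) * sqrt (real k + 1)"
  by (simp add: lag_b_def real_sqrt_mult[symmetric] algebra_simps)

lemma lag_b_minus_half: "lag_b (-1/2) k = sqrt (real (k - 1) + 1/2) * sqrt (real k)"
proof (cases k)
  case (Suc j)
  then show ?thesis unfolding Suc lag_b_minus_half_Suc by simp
qed (simp add: lag_b_def)

text \<open>The Jacobi matrix of the polynomials \<open>p\<^sup>(\<^sup>-\<^sup>1\<^sup>/\<^sup>2\<^sup>)\<^sub>l\<close> applied to \<open>w\<close>; since
  \<open>b\<^sub>0 = 0\<close>, the junk value \<open>w (0 - 1)\<close> does not matter.\<close>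
definition lag_jacobi :: "(nat \<Rightarrow> real) \<Rightarrow> nat \<Rightarrow> real" where
  "lag_jacobi w k = lag_b (-1/2) k * w (k - 1) + lag_a (-1/2) k * w k + lag_b (-1/2) (Suc k) * w (Suc k)"

lemma cmod_combination_sq_eq:
  "(cmod (complex_of_real a * y + complex_of_real b * y'))\<^sup>2
     = (a + b) * (a * (cmod y)\<^sup>2 + b * (cmod y')\<^sup>2) - a * b * (cmod (y - y'))\<^sup>2"
  unfolding cmod_power2 by (simp add: power2_eq_square algebra_simps)

lemma sum_bidiagonal_form_eq:
  fixes a b :: "nat \<Rightarrow> real" and y :: "nat \<Rightarrow> complex"
  assumes "b N = 0"
  shows "(\<Sum>k\<le>N. (cmod (complex_of_real (a k) * y k + complex_of_real (b k) * y (Suc k)))\<^sup>2)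
     = (\<Sum>k\<le>N. ((a k + b k) * a k + (if k = 0 then 0 else (a (k - 1) + b (k - 1)) * b (k - 1)))
                   * (cmod (y k))\<^sup>2)
       - (\<Sum>k\<le>N. a k * b k * (cmod (y k - y (Suc k)))\<^sup>2)"
proof -
  define g where "g j = (if j = 0 then 0 else (a (j - 1) + b (j - 1)) * b (j - 1) * (cmod (y j))\<^sup>2)" for j
  have "(\<Sum>k\<le>Suc N. g k) = g 0 + (\<Sum>k\<le>N. g (Suc k))"
    by (rule sum.atMost_Suc_shift)
  moreover have "g 0 = 0" "g (Suc N) = 0"
    using assms by (simp_all add: g_def)
  ultimately have shift: "(\<Sum>k\<le>N. g (Suc k)) = (\<Sum>k\<le>N. g k)"
    by simp
  have summand: "(cmod (complex_of_real (a k) * y k + complex_of_real (b k) * y (Suc k)))\<^sup>2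
      = ((a k + b k) * a k * (cmod (y k))\<^sup>2 + g (Suc k)) - a k * b k * (cmod (y k - y (Suc k)))\<^sup>2" for k
    unfolding cmod_combination_sq_eq by (simp add: g_def algebra_simps)
  have diagonal: "(a k + b k) * a k * (cmod (y k))\<^sup>2 + g k
      = ((a k + b k) * a k + (if k = 0 then 0 else (a (k - 1) + b (k - 1)) * b (k - 1))) * (cmod (y k))\<^sup>2" for k
    by (simp add: g_def algebra_simps)
  have "(\<Sum>k\<le>N. (cmod (complex_of_real (a k) * y k + complex_of_real (b k) * y (Suc k)))\<^sup>2)
      = (\<Sum>k\<le>N. (a k + b k) * a k * (cmod (y k))\<^sup>2 + g (Suc k))
        - (\<Sum>k\<le>N. a k * b k * (cmod (y k - y (Suc k)))\<^sup>2)"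
    by (simp only: summand sum_subtractf)
  also have "(\<Sum>k\<le>N. (a k + b k) * a k * (cmod (y k))\<^sup>2 + g (Suc k))
      = (\<Sum>k\<le>N. (a k + b k) * a k * (cmod (y k))\<^sup>2 + g k)"
    by (simp only: sum.distrib shift)
  finally show ?thesis
    by (simp only: diagonal)
qed

text \<open>\<open>var_even\<close> is \<open>\<parallel>D u\<parallel>\<^sup>2\<close> for a bidiagonal \<open>D\<close> with \<open>D\<^sup>T D\<close> the Jacobi matrix; summation
  by parts after the substitution \<open>u = w y\<close> is the discrete ground-state substitution.\<close>
lemma var_even_ground_state_substitution:
  fixes w :: "nat \<Rightarrow> real" and y :: "nat \<Rightarrow> complex"
  assumes "w (Suc N) = 0"
  shows "var_even N (\<lambda>k. complex_of_real (w k) * y k)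
     = (\<Sum>k\<le>N. w k * lag_jacobi w k * (cmod (y k))\<^sup>2)
       - (\<Sum>k\<le>N. lag_b (-1/2) (Suc k) * w k * w (Suc k) * (cmod (y k - y (Suc k)))\<^sup>2)"
proof -
  define a where "a k = sqrt (real k + 1/2) * w k" for k
  define b where "b k = sqrt (real k + 1) * w (Suc k)" for k
  have diagonal: "(a k + b k) * a k + (if k = 0 then 0 else (a (k - 1) + b (k - 1)) * b (k - 1))
      = w k * lag_jacobi w k" for k
  proof (cases k)
    case 0
    then show ?thesis
      unfolding lag_jacobi_def lag_b_minus_half_Suc lag_a_minus_half
      by (simp add: a_def b_def lag_b_def algebra_simps)
  next
    case (Suc j)
    then show ?thesis
      unfolding lag_jacobi_def lag_b_minus_half_Suc lag_a_minus_half lag_b_minus_half[of k]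
      by (simp add: a_def b_def algebra_simps)
  qed
  have off_diagonal: "a k * b k = lag_b (-1/2) (Suc k) * w k * w (Suc k)" for k
    unfolding lag_b_minus_half_Suc by (simp add: a_def b_def)
  have "var_even N (\<lambda>k. complex_of_real (w k) * y k)
      = (\<Sum>k\<le>N. (cmod (complex_of_real (a k) * y k + complex_of_real (b k) * y (Suc k)))\<^sup>2)"
    by (simp add: var_even_def a_def b_def mult.assoc)
  also have "\<dots> = (\<Sum>k\<le>N. ((a k + b k) * a k + (if k = 0 then 0 else (a (k - 1) + b (k - 1)) * b (k - 1)))
                   * (cmod (y k))\<^sup>2)
       - (\<Sum>k\<le>N. a k * b k * (cmod (y k - y (Suc k)))\<^sup>2)"
    using assms by (intro sum_bidiagonal_form_eq) (simp add: b_def)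
  finally show ?thesis
    by (simp only: diagonal off_diagonal)
qed

lemma eq_first_of_eq_Suc:
  assumes "\<And>k. M \<le> k \<Longrightarrow> k < N \<Longrightarrow> y (Suc k) = y k" "M \<le> k" "k \<le> N"
  shows "y k = y M"
  using assms(2,3) by (induction k rule: dec_induct) (use assms(1) in auto)

locale lag_ground_state =
  fixes M N :: nat and lam :: real and w :: "nat \<Rightarrow> real"
  assumes M_le_N: "M \<le> N"
    and support: "\<And>k. w k \<noteq> 0 \<longleftrightarrow> M \<le> k \<and> k \<le> N"
    and alternating: "\<And>k. M \<le> k \<Longrightarrow> k < N \<Longrightarrow> w k * w (Suc k) < 0"
    and eigenvector: "\<And>k. M \<le> k \<Longrightarrow> k \<le> N \<Longrightarrow> lag_jacobi w k = lam * w k"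
begin

lemma w_Suc_N: "w (Suc N) = 0"
  using support[of "Suc N"] by simp

lemma w_eq_0_iff: "w k = 0 \<longleftrightarrow> k < M \<or> N < k"
  using support[of k] by auto

lemma factor_through_w:
  assumes "\<And>k. u k \<noteq> 0 \<Longrightarrow> M \<le> k \<and> k \<le> N"
  shows "complex_of_real (w k) * (u k / complex_of_real (w k)) = u k"
  using assms[of k] support[of k] by (cases "w k = 0") auto

definition bond :: "nat \<Rightarrow> real" where
  "bond k = - lag_b (-1/2) (Suc k) * w k * w (Suc k)"

lemma bond_pos:
  assumes "M \<le> k" "k < N"
  shows "0 < bond k"
proof -
  have "0 < lag_b (-1/2) (Suc k)"
    by (rule lag_b_pos) auto
  then show ?thesis
    using alternating[OF assms] by (simp add: bond_def mult.assoc mult_pos_neg)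
qed

lemma bond_nonneg: "k \<le> N \<Longrightarrow> 0 \<le> bond k"
  using bond_pos[of k] w_eq_0_iff[of k] w_Suc_N by (cases "M \<le> k \<and> k < N") (auto simp: bond_def)

lemma var_even_factored:
  "var_even N (\<lambda>k. complex_of_real (w k) * y k)
     = lam * (\<Sum>k\<le>N. (cmod (complex_of_real (w k) * y k))\<^sup>2) + (\<Sum>k\<le>N. bond k * (cmod (y k - y (Suc k)))\<^sup>2)"
proof -
  have "w k * lag_jacobi w k = lam * (w k)\<^sup>2" if "k \<le> N" for k
    using that support[of k] eigenvector[of k] by (cases "w k = 0") (auto simp: power2_eq_square)
  then show ?thesis
    unfolding var_even_ground_state_substitution[where w = w and N = N, OF w_Suc_N]
    by (simp add: bond_def sum_distrib_left sum_negf[symmetric] norm_mult power_mult_distrib mult.assoc)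
qed

lemma var_even_decomposition:
  assumes "\<And>k. u k \<noteq> 0 \<Longrightarrow> M \<le> k \<and> k \<le> N"
  shows "var_even N u = lam * (\<Sum>k\<le>N. (cmod (u k))\<^sup>2)
           + (\<Sum>k\<le>N. bond k * (cmod (u k / complex_of_real (w k) - u (Suc k) / complex_of_real (w (Suc k))))\<^sup>2)"
proof -
  define y where "y k = u k / complex_of_real (w k)" for k
  have "complex_of_real (w k) * y k = u k" for k
    unfolding y_def by (rule factor_through_w[OF assms])
  then show ?thesis
    using var_even_factored[of y] unfolding y_def by simp
qed

lemma var_even_ge:
  assumes "\<And>k. u k \<noteq> 0 \<Longrightarrow> M \<le> k \<and> k \<le> N"
  shows "lam * (\<Sum>k\<le>N. (cmod (u k))\<^sup>2) \<le> var_even N u"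
proof -
  have "0 \<le> (\<Sum>k\<le>N. bond k * (cmod (u k / complex_of_real (w k) - u (Suc k) / complex_of_real (w (Suc k))))\<^sup>2)"
    by (intro sum_nonneg mult_nonneg_nonneg bond_nonneg) auto
  then show ?thesis
    using var_even_decomposition[of u, OF assms] by linarith
qed

lemma var_even_eq_imp_multiple:
  assumes supp: "\<And>k. u k \<noteq> 0 \<Longrightarrow> M \<le> k \<and> k \<le> N"
    and eq: "var_even N u = lam * (\<Sum>k\<le>N. (cmod (u k))\<^sup>2)"
  shows "\<exists>\<kappa>. u = (\<lambda>k. \<kappa> * complex_of_real (w k))"
proof -
  define y where "y k = u k / complex_of_real (w k)" for k
  have "(\<Sum>k\<le>N. bond k * (cmod (y k - y (Suc k)))\<^sup>2) = 0"
    using eq var_even_decomposition[OF supp] by (simp add: y_def)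
  then have zero_terms: "bond k * (cmod (y k - y (Suc k)))\<^sup>2 = 0" if "k \<le> N" for k
    using that bond_nonneg by (subst (asm) sum_nonneg_eq_0_iff) auto
  have "y (Suc k) = y k" if "M \<le> k" "k < N" for k
    using zero_terms[of k] bond_pos[OF that] that by simp
  then have y_const: "y k = y M" if "M \<le> k" "k \<le> N" for k
    using that by (rule eq_first_of_eq_Suc)
  have "u k = y M * complex_of_real (w k)" for k
  proof (cases "M \<le> k \<and> k \<le> N")
    case True
    then have "w k \<noteq> 0" "y M = u k / complex_of_real (w k)"
      using support[of k] y_const[of k] by (auto simp: y_def)
    then show ?thesis by simp
  next
    case False
    then show ?thesis
      using support[of k] supp[of k] by auto
  qed
  then show ?thesis by blast
qed

lemma var_even_multiple:
  "var_even N (\<lambda>k. \<kappa> * complex_of_real (w k)) = lam * (\<Sum>k\<le>N. (cmod (\<kappa> * complex_of_real (w k)))\<^sup>2)"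
  using var_even_factored[of "\<lambda>_. \<kappa>"] by (simp add: mult.commute)

lemma var_odd_ge:
  assumes "\<And>k. v k \<noteq> 0 \<Longrightarrow> M \<le> k \<and> k < N"
  shows "lam * (\<Sum>k\<le>N. (cmod (v k))\<^sup>2) \<le> var_odd N v"
proof -
  have "v N = 0" "v (Suc N) = 0"
    using assms[of N] assms[of "Suc N"] by auto
  then have "var_even N v \<le> var_odd N v"
    by (rule var_even_le_var_odd)
  moreover have "lam * (\<Sum>k\<le>N. (cmod (v k))\<^sup>2) \<le> var_even N v"
    using assms by (intro var_even_ge) fastforce
  ultimately show ?thesis by linarith
qed

text \<open>Equality would force \<open>v\<close> to be a multiple of \<open>w\<close>, but \<open>v\<^sub>N = 0 \<noteq> w\<^sub>N\<close>.\<close>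
lemma var_odd_eq_imp_zero:
  assumes supp: "\<And>k. v k \<noteq> 0 \<Longrightarrow> M \<le> k \<and> k < N"
    and eq: "var_odd N v = lam * (\<Sum>k\<le>N. (cmod (v k))\<^sup>2)"
  shows "v = (\<lambda>_. 0)"
proof -
  have vN: "v N = 0" "v (Suc N) = 0"
    using supp[of N] supp[of "Suc N"] by auto
  have supp': "\<And>k. v k \<noteq> 0 \<Longrightarrow> M \<le> k \<and> k \<le> N"
    using supp by fastforce
  have "lam * (\<Sum>k\<le>N. (cmod (v k))\<^sup>2) \<le> var_even N v"
    using supp' by (rule var_even_ge)
  then have "var_even N v = lam * (\<Sum>k\<le>N. (cmod (v k))\<^sup>2)"
    using var_even_le_var_odd[OF vN] eq by linarith
  then obtain \<kappa> where \<kappa>: "v = (\<lambda>k. \<kappa> * complex_of_real (w k))"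
    using var_even_eq_imp_multiple[OF supp'] by blast
  have "w N \<noteq> 0"
    using support[of N] M_le_N by simp
  then have "\<kappa> = 0"
    using vN(1) by (simp add: \<kappa>)
  then show ?thesis by (simp add: \<kappa>)
qed

end


lemma minimizers_of_varS:
  fixes S :: "(real \<Rightarrow> complex) set" and H :: "real \<Rightarrow> complex"
  assumes lower: "\<And>P. P \<in> S \<Longrightarrow> lam * (wnorm P)\<^sup>2 \<le> varS P"
    and equality: "\<And>P. P \<in> S \<Longrightarrow> varS P = lam * (wnorm P)\<^sup>2 \<Longrightarrow> \<exists>\<kappa>. P = (\<lambda>x. \<kappa> * H x)"
    and multiples: "\<And>\<kappa>. (\<lambda>x. \<kappa> * H x) \<in> S"
    and attained: "\<And>\<kappa>. varS (\<lambda>x. \<kappa> * H x) = lam * (wnorm (\<lambda>x. \<kappa> * H x))\<^sup>2"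
    and nonzero: "wnorm H \<noteq> 0"
  defines "T \<equiv> {P \<in> S. wnorm P = 1}"
  shows "{P \<in> T. \<forall>Q \<in> T. varS P \<le> varS Q} = {P. \<exists>\<kappa>. P = (\<lambda>x. \<kappa> * H x) \<and> wnorm P = 1}
     \<and> (\<exists>P \<in> T. varS P = lam) \<and> (\<forall>P \<in> T. lam \<le> varS P)"
proof -
  have lower_T: "lam \<le> varS P" if "P \<in> T" for P
    using that lower[of P] by (simp add: T_def)
  define \<kappa>0 where "\<kappa>0 = complex_of_real (1 / wnorm H)"
  define P0 where "P0 = (\<lambda>x. \<kappa>0 * H x)"
  have "wnorm P0 = 1"
    unfolding P0_def wnorm_scale \<kappa>0_def using nonzero wnorm_nonneg[of H] by (simp add: norm_divide)
  then have P0: "P0 \<in> T" "varS P0 = lam"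
    using multiples attained unfolding P0_def T_def by auto
  have "P \<in> T \<and> (\<forall>Q \<in> T. varS P \<le> varS Q) \<longleftrightarrow> (\<exists>\<kappa>. P = (\<lambda>x. \<kappa> * H x) \<and> wnorm P = 1)" for P
  proof
    assume P: "P \<in> T \<and> (\<forall>Q \<in> T. varS P \<le> varS Q)"
    then have "varS P = lam * (wnorm P)\<^sup>2"
      using P0 lower_T[of P] by (force simp: T_def)
    then show "\<exists>\<kappa>. P = (\<lambda>x. \<kappa> * H x) \<and> wnorm P = 1"
      using P equality by (auto simp: T_def)
  next
    assume "\<exists>\<kappa>. P = (\<lambda>x. \<kappa> * H x) \<and> wnorm P = 1"
    then show "P \<in> T \<and> (\<forall>Q \<in> T. varS P \<le> varS Q)"
      using multiples attained lower_T by (auto simp: T_def)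
  qed
  then show ?thesis
    using P0 lower_T by blast
qed

context lag_ground_state
begin

definition ground_poly :: "real \<Rightarrow> complex" where
  "ground_poly x = complex_of_real (\<Sum>l=M..N. w l * herm_h (2 * l) x)"

definition ground_coeff :: "complex \<Rightarrow> nat \<Rightarrow> complex" where
  "ground_coeff \<kappa> l = (if even l then \<kappa> * complex_of_real (w (l div 2)) else 0)"

lemma ground_coeff_support: "ground_coeff \<kappa> l \<noteq> 0 \<Longrightarrow> 2 * M \<le> l \<and> l \<le> 2 * N"
  using support[of "l div 2"] by (auto simp: ground_coeff_def elim!: evenE split: if_splits)

lemma ground_coeff_vanishes: "\<forall>l>2 * N. ground_coeff \<kappa> l = 0"
  using ground_coeff_support by force

lemma scaled_ground_poly_eq: "(\<lambda>x. \<kappa> * ground_poly x) = herm_expansion (ground_coeff \<kappa>) (2 * N)"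
proof
  fix x
  have "herm_expansion (ground_coeff \<kappa>) (2 * N) x
      = (\<Sum>j\<le>Suc (2 * N). ground_coeff \<kappa> j * complex_of_real (herm_h j x))"
    using ground_coeff_vanishes by (simp add: herm_expansion_def)
  also have "\<dots> = (\<Sum>k\<le>N. \<kappa> * complex_of_real (w k * herm_h (2 * k) x))"
    unfolding sum_atMost_Suc_double by (simp add: ground_coeff_def mult.assoc)
  also have "\<dots> = (\<Sum>k=M..N. \<kappa> * complex_of_real (w k * herm_h (2 * k) x))"
    by (intro sum.mono_neutral_right) (auto simp: w_eq_0_iff)
  finally show "\<kappa> * ground_poly x = herm_expansion (ground_coeff \<kappa>) (2 * N) x"
    by (simp add: ground_poly_def sum_distrib_left)
qed

lemma scaled_ground_poly_in_PiH_from: "(\<lambda>x. \<kappa> * ground_poly x) \<in> PiH_from (2 * M) (2 * N)"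
  unfolding scaled_ground_poly_eq using ground_coeff_support by (rule herm_expansion_in_PiH_from)

lemma wnorm_scaled_ground_poly_sq:
  "(wnorm (\<lambda>x. \<kappa> * ground_poly x))\<^sup>2 = (\<Sum>k\<le>N. (cmod (\<kappa> * complex_of_real (w k)))\<^sup>2)"
  unfolding scaled_ground_poly_eq wnorm_even_odd[OF ground_coeff_vanishes]
  by (simp add: ground_coeff_def)

lemma varS_scaled_ground_poly:
  "varS (\<lambda>x. \<kappa> * ground_poly x) = lam * (wnorm (\<lambda>x. \<kappa> * ground_poly x))\<^sup>2"
proof -
  have "varS (\<lambda>x. \<kappa> * ground_poly x) = var_even N (\<lambda>k. \<kappa> * complex_of_real (w k)) + var_odd N (\<lambda>_. 0)"
    unfolding scaled_ground_poly_eq varS_even_odd[OF ground_coeff_vanishes]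
    by (simp add: ground_coeff_def)
  then show ?thesis
    by (simp add: var_even_multiple var_odd_def wnorm_scaled_ground_poly_sq)
qed

lemma wnorm_ground_poly_pos: "wnorm ground_poly > 0"
proof -
  have "0 < (w M)\<^sup>2"
    using support[of M] M_le_N by simp
  also have "\<dots> \<le> (\<Sum>k\<le>N. (w k)\<^sup>2)"
    using M_le_N by (intro member_le_sum) auto
  also have "\<dots> = (wnorm ground_poly)\<^sup>2"
    using wnorm_scaled_ground_poly_sq[of 1] by simp
  finally show ?thesis
    using wnorm_nonneg[of ground_poly] by (simp add: zero_less_power2 less_le)
qed

lemma varS_ge_on_PiH_from:
  assumes "P \<in> PiH_from (2 * M) (2 * N)"
  shows "lam * (wnorm P)\<^sup>2 \<le> varS P"
proof -
  obtain u v where "\<And>k. u k \<noteq> 0 \<Longrightarrow> M \<le> k \<and> k \<le> N" "\<And>k. v k \<noteq> 0 \<Longrightarrow> M \<le> k \<and> k < N"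
    "(wnorm P)\<^sup>2 = (\<Sum>k\<le>N. (cmod (u k))\<^sup>2) + (\<Sum>k\<le>N. (cmod (v k))\<^sup>2)"
    "varS P = var_even N u + var_odd N v"
    by (rule PiH_from_even_odd[OF assms]) blast
  then show ?thesis
    using var_even_ge var_odd_ge by (simp add: distrib_left add_mono)
qed

lemma varS_eq_imp_scaled_ground_poly:
  assumes "P \<in> PiH_from (2 * M) (2 * N)" and eq: "varS P = lam * (wnorm P)\<^sup>2"
  shows "\<exists>\<kappa>. P = (\<lambda>x. \<kappa> * ground_poly x)"
proof -
  obtain u v where u: "\<And>k. u k \<noteq> 0 \<Longrightarrow> M \<le> k \<and> k \<le> N" and v: "\<And>k. v k \<noteq> 0 \<Longrightarrow> M \<le> k \<and> k < N"
    and norm: "(wnorm P)\<^sup>2 = (\<Sum>k\<le>N. (cmod (u k))\<^sup>2) + (\<Sum>k\<le>N. (cmod (v k))\<^sup>2)"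
    and var: "varS P = var_even N u + var_odd N v"
    and P: "P = herm_expansion (\<lambda>l. if even l then u (l div 2) else v (l div 2)) (2 * N)"
    by (rule PiH_from_even_odd[OF assms(1)]) blast
  have "lam * (\<Sum>k\<le>N. (cmod (u k))\<^sup>2) \<le> var_even N u"
    using u by (rule var_even_ge)
  moreover have "lam * (\<Sum>k\<le>N. (cmod (v k))\<^sup>2) \<le> var_odd N v"
    using v by (rule var_odd_ge)
  ultimately have "var_even N u = lam * (\<Sum>k\<le>N. (cmod (u k))\<^sup>2)" "var_odd N v = lam * (\<Sum>k\<le>N. (cmod (v k))\<^sup>2)"
    using eq unfolding norm var by (simp_all add: distrib_left)
  then obtain \<kappa> where u_eq: "u = (\<lambda>k. \<kappa> * complex_of_real (w k))" and v_eq: "v = (\<lambda>_. 0)"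
    using var_even_eq_imp_multiple[OF u] var_odd_eq_imp_zero[OF v] by blast
  have "P = (\<lambda>x. \<kappa> * ground_poly x)"
    unfolding P u_eq v_eq scaled_ground_poly_eq ground_coeff_def by simp
  then show ?thesis ..
qed

lemma minimizers_PiH_from:
  "{P \<in> {P \<in> PiH_from (2 * M) (2 * N). wnorm P = 1}.
       \<forall>Q \<in> {P \<in> PiH_from (2 * M) (2 * N). wnorm P = 1}. varS P \<le> varS Q}
     = {P. \<exists>\<kappa>. P = (\<lambda>x. \<kappa> * ground_poly x) \<and> wnorm P = 1}
   \<and> (\<exists>P \<in> {P \<in> PiH_from (2 * M) (2 * N). wnorm P = 1}. varS P = lam)
   \<and> (\<forall>P \<in> {P \<in> PiH_from (2 * M) (2 * N). wnorm P = 1}. lam \<le> varS P)"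
  using varS_ge_on_PiH_from varS_eq_imp_scaled_ground_poly scaled_ground_poly_in_PiH_from
    varS_scaled_ground_poly wnorm_ground_poly_pos
  by (intro minimizers_of_varS) auto

end


section \<open>The smallest zero of the associated Laguerre polynomials\<close>

lemma pos_below_smallest_zero:
  fixes f :: "real \<Rightarrow> real"
  assumes cont: "continuous_on UNIV f" and fin: "finite {x. f x = 0}"
    and nonpos: "\<And>x. x \<le> 0 \<Longrightarrow> 0 < f x" and below: "x < smallest_zero f"
  shows "0 < f x"
proof (rule ccontr)
  assume "\<not> 0 < f x"
  then have "0 < x" "f x \<le> 0"
    using nonpos[of x] by (auto simp: not_le[symmetric])
  then obtain \<zeta> where "\<zeta> \<le> x" "f \<zeta> = 0"
    using IVT2'[of f x 0 0] nonpos[of 0] continuous_on_subset[OF cont] by auto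
  then have "smallest_zero f \<le> x"
    unfolding smallest_zero_def using fin by (meson Min_le mem_Collect_eq order.trans)
  with below show False by simp
qed

lemma smallest_zero_below:
  fixes f :: "real \<Rightarrow> real"
  assumes cont: "continuous_on UNIV f" and fin: "finite {x. f x = 0}"
    and "0 < f 0" "f z < 0" "0 \<le> z"
  shows "f (smallest_zero f) = 0" "smallest_zero f < z"
proof -
  obtain \<zeta> where \<zeta>: "\<zeta> \<le> z" "f \<zeta> = 0"
    using IVT2'[of f z 0 0] assms continuous_on_subset[OF cont] by auto
  have "smallest_zero f \<in> {x. f x = 0}"
    unfolding smallest_zero_def using fin \<zeta> by (intro Min_in) auto
  moreover have "smallest_zero f \<le> \<zeta>"
    unfolding smallest_zero_def using fin \<zeta> by (intro Min_le) auto
  moreover have "\<zeta> \<noteq> z"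
    using \<zeta>(2) \<open>f z < 0\<close> by auto
  ultimately show "f (smallest_zero f) = 0" "smallest_zero f < z"
    using \<zeta>(1) by auto
qed

lemma lag_assoc_is_poly: "\<exists>p. \<forall>x. lag_assoc \<alpha> M j x = poly p x"
proof -
  have "\<exists>p q. (\<forall>x. lag_assoc \<alpha> M j x = poly p x) \<and> (\<forall>x. lag_assoc \<alpha> M (Suc j) x = poly q x)"
  proof (induction j)
    case 0
    have "lag_assoc \<alpha> M (Suc 0) x = poly (smult (1 / lag_b \<alpha> (M + 1)) [:- lag_a \<alpha> M, 1:]) x" for x
      by (simp add: diff_divide_distrib)
    then show ?case by (metis lag_assoc.simps(1) poly_1)
  next
    case (Suc j)
    then obtain p q where p: "\<forall>x. lag_assoc \<alpha> M j x = poly p x" and q: "\<forall>x. lag_assoc \<alpha> M (Suc j) x = poly q x"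
      by blast
    have "lag_assoc \<alpha> M (Suc (Suc j)) x
        = poly (smult (1 / lag_b \<alpha> (M + Suc j + 1))
                ([:- lag_a \<alpha> (M + Suc j), 1:] * q - smult (lag_b \<alpha> (M + Suc j)) p)) x" for x
      using p q by (simp add: diff_divide_distrib add_divide_distrib algebra_simps)
    then show ?case
      using q by blast
  qed
  then show ?thesis by blast
qed

text \<open>The polynomials \<open>(-1)\<^sup>j p\<^sup>(\<^sup>\<alpha>\<^sup>)\<^sub>j(x, M)\<close>; unlike \<open>p\<^sub>j\<close> they are positive for \<open>x \<le> 0\<close>,
  which keeps the sign bookkeeping below independent of \<open>j\<close>.\<close>
fun lag_signed :: "real \<Rightarrow> nat \<Rightarrow> nat \<Rightarrow> real \<Rightarrow> real" where
  "lag_signed \<alpha> M 0 x = 1"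
| "lag_signed \<alpha> M (Suc 0) x = (lag_a \<alpha> M - x) / lag_b \<alpha> (M + 1)"
| "lag_signed \<alpha> M (Suc (Suc l)) x =
     ((lag_a \<alpha> (M + Suc l) - x) * lag_signed \<alpha> M (Suc l) x - lag_b \<alpha> (M + Suc l) * lag_signed \<alpha> M l x)
       / lag_b \<alpha> (M + Suc l + 1)"

lemma lag_assoc_eq_signed: "lag_assoc \<alpha> M j x = (-1) ^ j * lag_signed \<alpha> M j x"
proof (induction \<alpha> M j x rule: lag_signed.induct)
  case (2 \<alpha> M x)
  have "(lag_a \<alpha> M - x) / lag_b \<alpha> (M + 1) = - ((x - lag_a \<alpha> M) / lag_b \<alpha> (M + 1))"
    by (simp add: minus_divide_left)
  then show ?case by simp
qed (simp_all add: diff_divide_distrib algebra_simps)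

lemma lag_signed_eq_assoc: "lag_signed \<alpha> M j x = (-1) ^ j * lag_assoc \<alpha> M j x"
  by (simp add: lag_assoc_eq_signed flip: power_add)

lemma lag_signed_zeros: "{x. lag_signed \<alpha> M j x = 0} = {x. lag_assoc \<alpha> M j x = 0}"
  by (simp add: lag_assoc_eq_signed)

lemma continuous_lag_signed: "continuous_on UNIV (lag_signed \<alpha> M j)"
proof -
  obtain p where "\<forall>x. lag_assoc \<alpha> M j x = poly p x"
    using lag_assoc_is_poly by blast
  then have "lag_signed \<alpha> M j = (\<lambda>x. (-1) ^ j * poly p x)"
    by (auto simp: lag_signed_eq_assoc)
  then show ?thesis
    by (simp add: continuous_intros)
qed

text \<open>Induction invariant: \<open>b\<^sub>M\<^sub>+\<^sub>j\<^sub>+\<^sub>1 f\<^sub>j \<le> (M + j + 1) f\<^sub>j\<^sub>+\<^sub>1\<close> for \<open>x \<le> 0\<close>; the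
  recurrence reproduces it because \<open>b\<^sub>n\<^sup>2 = n (n + \<alpha>)\<close> and \<open>a\<^sub>n = 2n + \<alpha> + 1\<close>.\<close>
lemma lag_signed_nonpos_invariant:
  assumes \<alpha>: "-1 < \<alpha>" and x: "x \<le> 0"
  shows "0 < lag_signed \<alpha> M j x
    \<and> lag_b \<alpha> (M + j + 1) * lag_signed \<alpha> M j x \<le> real (M + j + 1) * lag_signed \<alpha> M (Suc j) x"
proof (induction j)
  case 0
  have b: "0 < lag_b \<alpha> (M + 1)" "(lag_b \<alpha> (M + 1))\<^sup>2 = real (M + 1) * (real (M + 1) + \<alpha>)"
    using \<alpha> by (simp_all add: lag_b_pos lag_b_sq)
  have "(lag_b \<alpha> (M + 1))\<^sup>2 \<le> real (M + 1) * (lag_a \<alpha> M - x)"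
    unfolding b(2) lag_a_def using x by (intro mult_left_mono) auto
  then show ?case
    using b(1) by (simp add: power2_eq_square field_simps)
next
  case (Suc j)
  define n where "n = M + j + 2"
  define B where "B = lag_b \<alpha> n"
  define f0 f1 f2 where "f0 = lag_signed \<alpha> M j x" and "f1 = lag_signed \<alpha> M (Suc j) x"
    and "f2 = lag_signed \<alpha> M (Suc (Suc j)) x"
  have B: "0 < B" "B\<^sup>2 = real n * (real n + \<alpha>)"
    using \<alpha> by (simp_all add: B_def n_def lag_b_pos lag_b_sq)
  have f0: "0 < f0" and IH: "lag_b \<alpha> (M + j + 1) * f0 \<le> real (M + j + 1) * f1"
    using Suc.IH by (auto simp: f0_def f1_def)
  have f1: "0 < f1"
    using IH f0 lag_b_pos[OF \<alpha>, of "M + j + 1"] by (smt (verit) mult_pos_pos zero_less_mult_iff of_nat_0_le_iff le_add2)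
  have rec: "B * f2 = (lag_a \<alpha> (M + Suc j) - x) * f1 - lag_b \<alpha> (M + j + 1) * f0"
    using B(1) by (simp add: B_def n_def f0_def f1_def f2_def)
  have "(real n + \<alpha>) * f1 \<le> (lag_a \<alpha> (M + Suc j) - x - real (M + j + 1)) * f1"
    using x f1 by (intro mult_right_mono) (auto simp: lag_a_def n_def)
  then have "(real n + \<alpha>) * f1 \<le> B * f2"
    unfolding rec using IH by (simp add: algebra_simps)
  then have "real n * ((real n + \<alpha>) * f1) \<le> real n * (B * f2)"
    by (rule mult_left_mono) simp
  moreover have "B * (B * f1) = real n * ((real n + \<alpha>) * f1)"
    using B(2) by (metis mult.assoc power2_eq_square)
  ultimately have "B * (B * f1) \<le> B * (real n * f2)"
    by (metis mult.left_commute)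
  then have "B * f1 \<le> real n * f2"
    using B(1) by simp
  moreover have "M + Suc j + 1 = n"
    by (simp add: n_def)
  ultimately show ?case
    using f1 by (simp add: B_def f1_def f2_def del: lag_signed.simps)
qed

lemma lag_signed_pos_nonpos: "-1 < \<alpha> \<Longrightarrow> x \<le> 0 \<Longrightarrow> 0 < lag_signed \<alpha> M j x"
  using lag_signed_nonpos_invariant by blast

lemma finite_lag_signed_zeros:
  assumes "-1 < \<alpha>"
  shows "finite {x. lag_signed \<alpha> M j x = 0}"
proof -
  obtain p where p: "\<forall>x. lag_assoc \<alpha> M j x = poly p x"
    using lag_assoc_is_poly by blast
  have "p \<noteq> 0"
    using p lag_signed_pos_nonpos[OF assms, of 0 M j] by (auto simp: lag_assoc_eq_signed)
  then show ?thesis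
    unfolding lag_signed_zeros using p by (simp add: poly_roots_finite)
qed

lemma lag_signed_interlacing:
  assumes \<alpha>: "-1 < \<alpha>"
  shows "lag_signed \<alpha> M (Suc j) (smallest_zero (lag_signed \<alpha> M (Suc j))) = 0
    \<and> (\<forall>x \<le> smallest_zero (lag_signed \<alpha> M (Suc j)). \<forall>i \<le> j. 0 < lag_signed \<alpha> M i x)"
proof (induction j)
  case 0
  have "{x. lag_signed \<alpha> M (Suc 0) x = 0} = {lag_a \<alpha> M}"
    using lag_b_pos[OF \<alpha>, of "M + 1"] by auto
  then show ?case
    by (simp add: smallest_zero_def)
next
  case (Suc j)
  define z where "z = smallest_zero (lag_signed \<alpha> M (Suc j))"
  have z: "lag_signed \<alpha> M (Suc j) z = 0" and pos: "\<And>x i. x \<le> z \<Longrightarrow> i \<le> j \<Longrightarrow> 0 < lag_signed \<alpha> M i x"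
    using Suc.IH by (auto simp: z_def)
  have "0 < z"
    using z lag_signed_pos_nonpos[OF \<alpha>, of z M "Suc j"] by force
  have "lag_signed \<alpha> M (Suc (Suc j)) z < 0"
    using z pos[of z j] lag_b_pos[OF \<alpha>, of "M + Suc j"] lag_b_pos[OF \<alpha>, of "M + Suc j + 1"]
    by (simp add: divide_neg_pos)
  then have z': "lag_signed \<alpha> M (Suc (Suc j)) (smallest_zero (lag_signed \<alpha> M (Suc (Suc j)))) = 0"
      "smallest_zero (lag_signed \<alpha> M (Suc (Suc j))) < z"
    using smallest_zero_below[OF continuous_lag_signed finite_lag_signed_zeros[OF \<alpha>]
        lag_signed_pos_nonpos[OF \<alpha> order.refl] _ less_imp_le[OF \<open>0 < z\<close>]] by blast+
  have "0 < lag_signed \<alpha> M (Suc j) x" if "x < z" for x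
    using pos_below_smallest_zero[OF continuous_lag_signed[of \<alpha> M "Suc j"]
        finite_lag_signed_zeros[OF \<alpha>, of M "Suc j"] lag_signed_pos_nonpos[OF \<alpha>]] that
    unfolding z_def by blast
  then show ?case
    using z' pos by (auto simp: le_Suc_eq simp del: lag_signed.simps)
qed

lemma lag_assoc_recurrence:
  assumes "lag_b \<alpha> (M + i + 1) \<noteq> 0"
  shows "lag_b \<alpha> (M + i + 1) * lag_assoc \<alpha> M (Suc i) x
    = (x - lag_a \<alpha> (M + i)) * lag_assoc \<alpha> M i x
      - (if i = 0 then 0 else lag_b \<alpha> (M + i) * lag_assoc \<alpha> M (i - 1) x)"
  using assms by (cases i) simp_all

text \<open>The associated polynomials \<open>p\<^sub>k\<^sub>-\<^sub>M(x, M)\<close> at the smallest zero of \<open>p\<^sub>N\<^sub>-\<^sub>M\<^sub>+\<^sub>1(x, M)\<close> form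
  an eigenvector of the Jacobi matrix restricted to rows \<open>M, \<dots>, N\<close>: the three-term recurrence is
  the eigenvalue equation, and the vanishing of \<open>p\<^sub>N\<^sub>-\<^sub>M\<^sub>+\<^sub>1\<close> cuts it off at row \<open>N\<close>.\<close>
locale lag_assoc_ground_state =
  fixes M N :: nat
  assumes M_le_N: "M \<le> N"
begin

definition lam :: real where
  "lam = smallest_zero (lag_assoc (-1/2) M (Suc (N - M)))"

definition ground :: "nat \<Rightarrow> real" where
  "ground k = (if M \<le> k \<and> k \<le> N then lag_assoc (-1/2) M (k - M) lam else 0)"

lemma lam_zero_and_signs:
  "lag_assoc (-1/2) M (Suc (N - M)) lam = 0" "\<And>i. i \<le> N - M \<Longrightarrow> 0 < lag_signed (-1/2) M i lam"
proof -
  have lam: "lam = smallest_zero (lag_signed (-1/2) M (Suc (N - M)))"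
    by (simp add: lam_def smallest_zero_def lag_signed_zeros)
  show "lag_assoc (-1/2) M (Suc (N - M)) lam = 0" "\<And>i. i \<le> N - M \<Longrightarrow> 0 < lag_signed (-1/2) M i lam"
    using lag_signed_interlacing[of "-1/2" M "N - M"] unfolding lam[symmetric]
    by (simp_all add: lag_assoc_eq_signed)
qed

lemma ground_eq: "M \<le> k \<Longrightarrow> k \<le> N \<Longrightarrow> ground k = (-1) ^ (k - M) * lag_signed (-1/2) M (k - M) lam"
  by (simp add: ground_def lag_assoc_eq_signed)

lemma ground_support: "ground k \<noteq> 0 \<longleftrightarrow> M \<le> k \<and> k \<le> N"
proof (cases "M \<le> k \<and> k \<le> N")
  case True
  then show ?thesis
    using lam_zero_and_signs(2)[of "k - M"] diff_le_mono[of k N M] by (simp add: ground_eq)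
qed (auto simp: ground_def)

lemma ground_alternating:
  assumes "M \<le> k" "k < N"
  shows "ground k * ground (Suc k) < 0"
proof -
  have "ground k * ground (Suc k)
      = - (lag_signed (-1/2) M (k - M) lam * lag_signed (-1/2) M (Suc (k - M)) lam)"
    using assms by (simp add: ground_eq Suc_diff_le)
  also have "\<dots> < 0"
    using assms lam_zero_and_signs(2)[of "k - M"] lam_zero_and_signs(2)[of "Suc (k - M)"] by simp
  finally show ?thesis .
qed

lemma ground_eigenvector:
  assumes k: "M \<le> k" "k \<le> N"
  shows "lag_jacobi ground k = lam * ground k"
proof -
  define i where "i = k - M"
  have k_eq: "k = M + i"
    using k by (simp add: i_def)
  have up: "ground (Suc k) = lag_assoc (-1/2) M (Suc i) lam"
    using k lam_zero_and_signs(1) by (cases "k = N") (auto simp: ground_def i_def Suc_diff_le)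
  have down: "lag_b (-1/2) k * ground (k - 1)
      = (if i = 0 then 0 else lag_b (-1/2) (M + i) * lag_assoc (-1/2) M (i - 1) lam)"
    using k by (cases "k = 0") (auto simp: ground_def i_def lag_b_def)
  have "lag_b (-1/2) (M + i + 1) * lag_assoc (-1/2) M (Suc i) lam
      = (lam - lag_a (-1/2) (M + i)) * lag_assoc (-1/2) M i lam
        - (if i = 0 then 0 else lag_b (-1/2) (M + i) * lag_assoc (-1/2) M (i - 1) lam)"
    by (rule lag_assoc_recurrence) (simp add: lag_b_def)
  then show ?thesis
    unfolding lag_jacobi_def down up using k by (simp add: ground_def k_eq algebra_simps)
qed

sublocale lag_ground_state M N lam ground
  using M_le_N ground_support ground_alternating ground_eigenvector by unfold_locales

end


lemma lag_p_eq_lag_assoc: "lag_p \<alpha> l x = lag_p \<alpha> 0 x * lag_assoc \<alpha> 0 l x"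
  by (induction \<alpha> l x rule: lag_p.induct)
     (simp_all del: lag_p.simps(1) add: times_divide_eq_right algebra_simps)

lemma lag_p_0_nonzero:
  assumes "-1 < \<alpha>"
  shows "lag_p \<alpha> 0 x \<noteq> 0"
proof -
  have "0 < Gamma (\<alpha> + 1)"
    using assms by (intro Gamma_real_pos) simp
  then show ?thesis by simp
qed

lemma lag_p_zeros: "-1 < \<alpha> \<Longrightarrow> {x. lag_p \<alpha> l x = 0} = {x. lag_assoc \<alpha> 0 l x = 0}"
  using lag_p_0_nonzero by (subst lag_p_eq_lag_assoc) simp

lemma lam_n_eq_lam_mn: "lam_n n = lam_mn 0 n"
  by (simp add: lam_n_def lam_mn_def smallest_zero_def lag_p_zeros)

lemma Hcal_eq_Hcal_from: "Hcal n x = complex_of_real (lag_p (-1/2) 0 0) * Hcal_from 0 n x"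
proof -
  have "lag_p (-1/2) l (lam_mn 0 n) = lag_p (-1/2) 0 0 * lag_assoc (-1/2) 0 l (lam_mn 0 n)" for l
    by (subst lag_p_eq_lag_assoc) simp
  then show ?thesis
    unfolding Hcal_def Hcal_from_def lam_n_eq_lam_mn
    by (simp add: sum_distrib_left atMost_atLeast0 mult.assoc)
qed

lemma SH_eq_SH_from: "SH n = SH_from 0 n"
  unfolding SH_def SH_from_def PiH_def PiH_from_def by (simp add: atMost_atLeast0)

lemma normalized_multiples_scale:
  assumes "c \<noteq> 0"
  shows "{P. \<exists>\<kappa>. P = (\<lambda>x. \<kappa> * (c * H x)) \<and> wnorm P = 1} = {P. \<exists>\<kappa>. P = (\<lambda>x. \<kappa> * H x) \<and> wnorm P = 1}"
proof -
  have "(\<exists>\<kappa>. P = (\<lambda>x. \<kappa> * (c * H x))) \<longleftrightarrow> (\<exists>\<kappa>. P = (\<lambda>x. \<kappa> * H x))" for P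
    using assms by (metis mult.assoc nonzero_divide_eq_eq times_divide_eq_left)
  then show ?thesis by blast
qed

lemma minimizers_SH_from:
  fixes n m :: nat
  assumes "even n" "even m" "m \<le> n"
  shows "{P \<in> SH_from m n. \<forall>Q \<in> SH_from m n. varS P \<le> varS Q}
           = {P. \<exists>\<kappa>2 :: complex. P = (\<lambda>x. \<kappa>2 * Hcal_from m n x) \<and> wnorm P = 1}
       \<and> (\<exists>P \<in> SH_from m n. varS P = lam_mn m n) \<and> (\<forall>P \<in> SH_from m n. lam_mn m n \<le> varS P)"
proof -
  define M N where "M = m div 2" and "N = n div 2"
  have m: "m = 2 * M" and n: "n = 2 * N"
    using assms by (auto simp: M_def N_def)
  interpret lag_assoc_ground_state M N
    by standard (use assms in \<open>simp add: M_def N_def div_le_mono\<close>)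
  have "(n - m) div 2 = N - M"
    unfolding m n by (simp flip: diff_mult_distrib2)
  then have "lam_mn m n = lam"
    by (simp add: lam_mn_def lam_def flip: M_def)
  moreover have "Hcal_from m n = ground_poly"
    unfolding Hcal_from_def ground_poly_def \<open>lam_mn m n = lam\<close>
    by (intro ext arg_cong[where f = complex_of_real] sum.cong) (auto simp: ground_def simp flip: M_def N_def)
  moreover have "SH_from m n = {P \<in> PiH_from (2 * M) (2 * N). wnorm P = 1}"
    unfolding SH_from_def m n ..
  ultimately show ?thesis
    using minimizers_PiH_from by simp
qed

theorem theorem5p2:
  fixes n m :: nat
  assumes "even n" "even m" "m \<le> n"
  shows "{P \<in> SH n. \<forall>Q \<in> SH n. varS P \<le> varS Q}
           = {P. \<exists>\<kappa>1 :: complex. P = (\<lambda>x. \<kappa>1 * Hcal n x) \<and> wnorm P = 1}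
       \<and> (\<exists>P \<in> SH n. varS P = lam_n n) \<and> (\<forall>P \<in> SH n. lam_n n \<le> varS P)
       \<and> {P \<in> SH_from m n. \<forall>Q \<in> SH_from m n. varS P \<le> varS Q}
           = {P. \<exists>\<kappa>2 :: complex. P = (\<lambda>x. \<kappa>2 * Hcal_from m n x) \<and> wnorm P = 1}
       \<and> (\<exists>P \<in> SH_from m n. varS P = lam_mn m n) \<and> (\<forall>P \<in> SH_from m n. lam_mn m n \<le> varS P)"
proof -
  have c: "complex_of_real (lag_p (-1/2) 0 0) \<noteq> 0"
    using lag_p_0_nonzero[of "-1/2" 0] by simp
  have "{P \<in> SH n. \<forall>Q \<in> SH n. varS P \<le> varS Q}
           = {P. \<exists>\<kappa>1 :: complex. P = (\<lambda>x. \<kappa>1 * Hcal n x) \<and> wnorm P = 1}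
       \<and> (\<exists>P \<in> SH n. varS P = lam_n n) \<and> (\<forall>P \<in> SH n. lam_n n \<le> varS P)"
    using minimizers_SH_from[of n 0] assms
    unfolding SH_eq_SH_from lam_n_eq_lam_mn Hcal_eq_Hcal_from normalized_multiples_scale[OF c]
    by simp
  then show ?thesis
    using minimizers_SH_from[OF assms] by blast
qed

end
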